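(* Let $\mathcal{A}$ be an alphabet with at least three letters. Then every steady word over $\mathcal{A}$ is bifurcate over $\mathcal{A}$.
   Context: A factor of a word $W$ is a contiguous subword. A square is a nonempty word of the form $XX$; a word is square-free if it has no factor that is a square. For a word $W$ of length $n$ and $0\le i\le n$, let $P_i(W)$ and $S_i(W)$ be the prefix and suffix of $W$ of length $i$. An extension of $W$ at position $i$ (over $\mathcal{A}$) is a word $P_i(W)\mathtt{x}S_{n-i}(W)$ with $\mathtt{x}\in\mathcal{A}$. A square-free word $W$ is steady if every word obtained from $W$ by deleting exactly one letter (at any position) is square-free. A square-free word $W$ of length $n$ is bifurcate over $\mathcal{A}$ if for every position $i\in\{0,1,\dots,n\}$ there is a letter $\mathtt{x}\in\mathcal{A}$ such that the extension $P_i(W)\mathtt{x}S_{n-i}(W)$ is square-free. *)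

theory Defs
  imports Main
begin

definition is_square :: "'a list \<Rightarrow> bool" where
  "is_square w \<longleftrightarrow> (\<exists>x. x \<noteq> [] \<and> w = x @ x)"

definition is_factor :: "'a list \<Rightarrow> 'a list \<Rightarrow> bool" where
  "is_factor u w \<longleftrightarrow> (\<exists>p s. w = p @ u @ s)"

definition square_free :: "'a list \<Rightarrow> bool" where
  "square_free w \<longleftrightarrow> \<not> (\<exists>u. is_factor u w \<and> is_square u)"

definition P :: "nat \<Rightarrow> 'a list \<Rightarrow> 'a list" where
  "P i w = take i w"

definition S :: "nat \<Rightarrow> 'a list \<Rightarrow> 'a list" where
  "S i w = drop (length w - i) w"

definition extension :: "'a list \<Rightarrow> nat \<Rightarrow> 'a \<Rightarrow> 'a list" where
  "extension w i x = P i w @ [x] @ S (length w - i) w"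

definition steady :: "'a list \<Rightarrow> bool" where
  "steady w \<longleftrightarrow> square_free w \<and>
     (\<forall>i < length w. square_free (take i w @ drop (Suc i) w))"

definition bifurcate :: "'a set \<Rightarrow> 'a list \<Rightarrow> bool" where
  "bifurcate A w \<longleftrightarrow> square_free w \<and>
     (\<forall>i \<le> length w. \<exists>x \<in> A. square_free (extension w i x))"

end

theory Submission
  imports Defs
begin

text \<open>Insert at position i a letter x differing from both neighbours of that position; at least
  one of three letters qualifies. Suppose the result has a square factor YY. It cannot lie
  inside w, so it covers x, say x is the k-th letter of one copy of Y. Then the k-th letter of
  the other copy is also x, and it is a letter of w; deleting it from w leaves the square
  (Y - x)(Y - x), which steadiness forbids unless Y = x. But then x equals a neighbour of the
  insertion position, contrary to its choice.\<close>

lemma square_free_iff_no_square_factor: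
  "square_free w \<longleftrightarrow> (\<forall>p Y s. Y \<noteq> [] \<longrightarrow> w \<noteq> p @ Y @ Y @ s)"
  unfolding square_free_def is_factor_def is_square_def
  by (auto simp del: append_assoc) (metis append.assoc)+

lemma not_square_free_if_square_factor:
  assumes "Y \<noteq> []" "w = p @ Y @ Y @ s"
  shows "\<not> square_free w"
  using assms square_free_iff_no_square_factor by blast

lemma steady_square_free: "steady w \<Longrightarrow> square_free w"
  unfolding steady_def by blast

lemma steady_delete_letter:
  assumes "steady w" "w = U @ y # V"
  shows "square_free (U @ V)"
proof -
  have "length U < length w" using assms(2) by simp
  with assms(1) have "square_free (take (length U) w @ drop (Suc (length U)) w)"
    unfolding steady_def by blast
  with assms(2) show ?thesis by simp
qed

lemma inserted_letter_in_square:
  assumes eq: "U @ x # V = p @ Y @ Y @ s"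
    and lo: "length p \<le> length U" and hi: "length U < length p + 2 * length Y"
  obtains y1 y2 where "Y = y1 @ x # y2"
    "U = p @ y1 \<and> V = y2 @ Y @ s \<or> U = p @ Y @ y1 \<and> V = y2 @ s"
proof -
  have U: "U = take (length U) (p @ Y @ Y @ s)"
    using arg_cong[OF eq, of "take (length U)"] by simp
  have xV: "x # V = drop (length U) (p @ Y @ Y @ s)"
    using arg_cong[OF eq, of "drop (length U)"] by simp
  show thesis
  proof (cases "length U < length p + length Y")
    case True
    define k where "k = length U - length p"
    have k: "k < length Y" using True lo k_def by simp
    have "x # V = drop k Y @ Y @ s" using xV lo True k_def by simp
    also have "drop k Y = Y ! k # drop (Suc k) Y" using k by (simp add: Cons_nth_drop_Suc)
    finally have "Y ! k = x" "V = drop (Suc k) Y @ Y @ s" by simp_all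
    moreover have "U = p @ take k Y" using U lo True k_def by simp
    ultimately show thesis
      using that[of "take k Y" "drop (Suc k) Y"] id_take_nth_drop[OF k] by simp
  next
    case False
    define k where "k = length U - length p - length Y"
    have k: "k < length Y" using False hi k_def by simp
    have "x # V = drop k Y @ s" using xV lo False hi k_def by simp
    also have "drop k Y = Y ! k # drop (Suc k) Y" using k by (simp add: Cons_nth_drop_Suc)
    finally have "Y ! k = x" "V = drop (Suc k) Y @ s" by simp_all
    moreover have "U = p @ Y @ take k Y" using U lo False hi k_def by simp
    ultimately show thesis
      using that[of "take k Y" "drop (Suc k) Y"] id_take_nth_drop[OF k] by simp
  qed
qed

lemma steady_insert_square_free:
  assumes st: "steady (U @ V)"
    and last: "U \<noteq> [] \<Longrightarrow> x \<noteq> last U" and hd: "V \<noteq> [] \<Longrightarrow> x \<noteq> hd V"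
  shows "square_free (U @ x # V)"
  unfolding square_free_iff_no_square_factor
proof (intro allI impI notI)
  fix p Y s
  assume Y: "Y \<noteq> []" and eq: "U @ x # V = p @ Y @ Y @ s"
  have sf: "square_free (U @ V)" using st by (rule steady_square_free)
  consider "length p + 2 * length Y \<le> length U" | "length U < length p"
    | "length p \<le> length U" "length U < length p + 2 * length Y" by linarith
  then show False
  proof cases
    case 1
    then have "U = p @ Y @ Y @ take (length U - (length p + length Y + length Y)) s"
      using arg_cong[OF eq, of "take (length U)"] by simp
    then show False
      using sf not_square_free_if_square_factor[OF Y, of "U @ V" p
          "take (length U - (length p + length Y + length Y)) s @ V"] by simp
  next
    case 2
    then obtain z q where "drop (length U) p = z # q"
      by (cases "drop (length U) p") auto
    moreover have "x # V = drop (length U) p @ Y @ Y @ s"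
      using 2 arg_cong[OF eq, of "drop (length U)"] by simp
    ultimately have "V = q @ Y @ Y @ s" by simp
    then show False
      using sf not_square_free_if_square_factor[OF Y, of "U @ V" "U @ q" s] by simp
  next
    case 3
    obtain y1 y2 where Ysplit: "Y = y1 @ x # y2"
      and UV: "U = p @ y1 \<and> V = y2 @ Y @ s \<or> U = p @ Y @ y1 \<and> V = y2 @ s"
      by (rule inserted_letter_in_square[OF eq 3])
    have "square_free (p @ (y1 @ y2) @ (y1 @ y2) @ s)"
      using UV
    proof (elim disjE conjE)
      assume "U = p @ y1" "V = y2 @ Y @ s"
      then have "U @ V = (p @ y1 @ y2 @ y1) @ x # (y2 @ s)" using Ysplit by simp
      from steady_delete_letter[OF st this] show ?thesis by simp
    next
      assume "U = p @ Y @ y1" "V = y2 @ s"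
      then have "U @ V = (p @ y1) @ x # (y2 @ y1 @ y2 @ s)" using Ysplit by simp
      from steady_delete_letter[OF st this] show ?thesis by simp
    qed
    then have "y1 = [] \<and> y2 = []"
      using not_square_free_if_square_factor[of "y1 @ y2" _ p s] by blast
    with UV Ysplit have "V = x # s \<or> U = p @ [x]" by auto
    then show False using last hd by auto
  qed
qed

lemma exists_letter_avoiding:
  assumes "a \<in> A" "b \<in> A" "c \<in> A" "a \<noteq> b" "a \<noteq> c" "b \<noteq> c"
  shows "\<exists>x\<in>A. x \<noteq> y \<and> x \<noteq> z"
proof (cases "a \<noteq> y \<and> a \<noteq> z")
  case True
  then show ?thesis using assms(1) by blast
next
  case False
  then have "b \<noteq> y \<and> b \<noteq> z \<or> c \<noteq> y \<and> c \<noteq> z" using assms(4-6) by auto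
  then show ?thesis using assms(2,3) by blast
qed

lemma extension_eq: "i \<le> length w \<Longrightarrow> extension w i x = take i w @ x # drop i w"
  unfolding extension_def P_def S_def by simp

theorem mainTheorem4:
  fixes A :: "'a set" and w :: "'a list"
  assumes "\<exists>a\<in>A. \<exists>b\<in>A. \<exists>c\<in>A. a \<noteq> b \<and> a \<noteq> c \<and> b \<noteq> c"
    and "set w \<subseteq> A"
    and "steady w"
  shows "bifurcate A w"
  unfolding bifurcate_def
proof (intro conjI allI impI)
  show "square_free w" using assms(3) by (rule steady_square_free)
next
  fix i assume i: "i \<le> length w"
  obtain a b c where abc: "a \<in> A" "b \<in> A" "c \<in> A" "a \<noteq> b" "a \<noteq> c" "b \<noteq> c"
    using assms(1) by blast
  obtain x where x: "x \<in> A" "x \<noteq> last (take i w)" "x \<noteq> hd (drop i w)"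
    using exists_letter_avoiding[OF abc] by blast
  have "square_free (take i w @ x # drop i w)"
    by (rule steady_insert_square_free) (use assms(3) x in simp_all)
  then show "\<exists>x\<in>A. square_free (extension w i x)"
    using x(1) extension_eq[OF i] by auto
qed

end
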